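(* Let $W=\mathfrak{S}_n$, $\ast=\mathrm{id}$, $w\in I_\ast$, and let $(s_{i_1},\dots,s_{i_k},w)$ be a reduced sequence with $k\ge3$ and $i_{k-2}=i_k=i_{k-1}\pm1$. Write $x=s_{i_k}$, $y=s_{i_{k-1}}$. Then exactly one of the following holds: (a) $xw\ne wx$, $yxwx\neq xwxy$, $xyxwxy\neq yxwxyx$, and $yw\neq wy$, $xywy\neq ywyx$, $yxywyx\neq xywyxy$; or (b) $xw\neq wx$, $yxwx\ne xwxy$, $xyxwxy=yxwxyx$, and $yw=wy$, $xyw\neq ywx$, $yxywx\neq xywxy$; or (c) $xw=wx$, $yxw\neq xwy$, $xyxwy\neq yxwyx$, and $yw\neq wy$, $xywy\ne ywyx$, $yxywyx=xywyxy$.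
   Context: $\mathfrak{S}_n$ with $s_i=(i,i+1)$, $S=\{s_1,\dots,s_{n-1}\}$; $I_\ast=\{w\in\mathfrak{S}_n:w^2=1\}$. For $s\in S$, $w\in I_\ast$: $s\ltimes w=sw$ if $sw=ws$, $s\ltimes w=sws$ otherwise; iterated from the right. $\rho(w)$ is the minimal $k$ with $w=s_{i_1}\ltimes\cdots\ltimes s_{i_k}\ltimes 1$. A sequence $(s_{i_1},\dots,s_{i_k},w)$ is reduced if $\rho(s_{i_1}\ltimes\cdots\ltimes s_{i_k}\ltimes w)=\rho(w)+k$. *)

theory Defs
  imports "HOL-Combinatorics.Combinatorics"
begin

text \<open>The symmetric group S_n realised as permutations of {1..n}; the product
  u w is function composition u \<circ> w.\<close>

definition Sym :: "nat \<Rightarrow> (nat \<Rightarrow> nat) set" where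
  "Sym n = {w. w permutes {1..n}}"

definition Inv :: "nat \<Rightarrow> (nat \<Rightarrow> nat) set" where
  "Inv n = {w \<in> Sym n. w \<circ> w = id}"

definition sr :: "nat \<Rightarrow> nat \<Rightarrow> nat" where
  "sr i = transpose i (Suc i)"

definition act :: "(nat \<Rightarrow> nat) \<Rightarrow> (nat \<Rightarrow> nat) \<Rightarrow> (nat \<Rightarrow> nat)" where
  "act s w = (if s \<circ> w = w \<circ> s then s \<circ> w else s \<circ> w \<circ> s)"

text \<open>s_{i_1} \<ltimes> (s_{i_2} \<ltimes> ( ... (s_{i_k} \<ltimes> w))), for the index list [i_1,...,i_k].\<close>
definition act_seq :: "nat list \<Rightarrow> (nat \<Rightarrow> nat) \<Rightarrow> (nat \<Rightarrow> nat)" where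
  "act_seq is w = foldr (\<lambda>i v. act (sr i) v) is w"

definition rho :: "nat \<Rightarrow> (nat \<Rightarrow> nat) \<Rightarrow> nat" where
  "rho n w = (LEAST k. \<exists>is. length is = k \<and> set is \<subseteq> {1..<n} \<and> act_seq is id = w)"

definition reduced_seq :: "nat \<Rightarrow> nat list \<Rightarrow> (nat \<Rightarrow> nat) \<Rightarrow> bool" where
  "reduced_seq n is w \<longleftrightarrow> set is \<subseteq> {1..<n} \<and> w \<in> Inv n \<and>
     rho n (act_seq is w) = rho n w + length is"

end

theory Submission
  imports Defs
begin

text \<open>Let \<open>inv_exc w\<close> be the number of inversions of an involution \<open>w\<close> of \<open>{1..n}\<close> plus its
  number of excedances (that is, of its 2-cycles). A step \<open>s\<^sub>i \<ltimes> w\<close> raises \<open>inv_exc\<close> by 2 if \<open>i\<close>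
  is an ascent of \<open>w\<close> and lowers it by 2 otherwise, and every involution other than the identity
  has a descent; hence \<open>2 \<rho>(w) = inv_exc w\<close>, and in a reduced sequence every step acts at an
  ascent. For the last three steps, at \<open>i\<close>, \<open>i \<plusminus> 1\<close>, \<open>i\<close>, these ascent conditions constrain \<open>w\<close> on
  \<open>{i, i+1, i+2}\<close> enough that a finite case analysis of the commutation tests made by \<open>\<ltimes>\<close> leaves
  exactly the cases (a), (b), (c).\<close>

lemma sr_apply: "sr i t = (if t = i then Suc i else if t = Suc i then i else t)"
  by (simp add: sr_def transpose_def)

lemma sr_sr [simp]: "sr i (sr i t) = t"
  by (simp add: sr_def)

lemma sr_comp_sr [simp]: "sr i \<circ> sr i = id"
  by (simp add: fun_eq_iff)

lemma inj_sr [simp]: "inj (sr i)"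
  by (simp add: sr_def)

lemma sr_permutes: "i \<in> {1..<n} \<Longrightarrow> sr i permutes {1..n}"
  unfolding sr_def by (intro permutes_swap_id) auto

lemma sr_less_sr_iff:
  "a \<noteq> b \<Longrightarrow> {a, b} \<noteq> {i, Suc i} \<Longrightarrow> sr i a < sr i b \<longleftrightarrow> a < b"
  by (auto simp: sr_apply doubleton_eq_iff)

lemma involution_image_iff: "(\<And>x. f (f x) = x) \<Longrightarrow> y \<in> f ` S \<longleftrightarrow> f y \<in> S"
  by (metis image_eqI imageE)

lemma map_prod_sr_sr: "map_prod (sr i) (sr i) (map_prod (sr i) (sr i) x) = x"
  by (cases x) simp

lemma InvD:
  assumes "v \<in> Inv n"
  shows "v permutes {1..n}" and "v (v t) = t" and "inj v"
proof -
  show p: "v permutes {1..n}" using assms by (simp add: Inv_def Sym_def)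
  show "v (v t) = t" using assms by (simp add: Inv_def pointfree_idE)
  show "inj v" using p by (rule permutes_inj)
qed

lemma Inv_closed: "v \<in> Inv n \<Longrightarrow> p \<in> {1..n} \<Longrightarrow> v p \<in> {1..n}"
  by (metis InvD(1) permutes_in_image)

lemma id_Inv: "id \<in> Inv n"
  by (simp add: Inv_def Sym_def permutes_id)

lemma sr_Inv: "i \<in> {1..<n} \<Longrightarrow> sr i \<in> Inv n"
  using sr_permutes[of i n] by (simp add: Inv_def Sym_def)

definition commutes :: "('a \<Rightarrow> 'a) \<Rightarrow> ('a \<Rightarrow> 'a) \<Rightarrow> bool" where
  "commutes s v \<longleftrightarrow> s \<circ> v = v \<circ> s"

lemma commutes_sr_iff:
  assumes "inj v"
  shows "commutes (sr i) v \<longleftrightarrow> (v i = i \<and> v (Suc i) = Suc i) \<or> (v i = Suc i \<and> v (Suc i) = i)"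
proof
  assume "commutes (sr i) v"
  then have "sr i (v t) = v (sr i t)" for t by (metis commutes_def comp_apply)
  from this[of i] this[of "Suc i"] assms show "(v i = i \<and> v (Suc i) = Suc i) \<or> (v i = Suc i \<and> v (Suc i) = i)"
    by (auto simp: sr_apply inj_eq split: if_splits)
next
  assume "(v i = i \<and> v (Suc i) = Suc i) \<or> (v i = Suc i \<and> v (Suc i) = i)"
  with assms show "commutes (sr i) v"
    by (auto simp: commutes_def fun_eq_iff sr_apply) (metis injD)+
qed

lemma commutes_comp_iff: "s \<circ> s = id \<Longrightarrow> commutes s (s \<circ> v) \<longleftrightarrow> commutes s v"
  by (simp add: commutes_def comp_assoc[symmetric]) (metis comp_assoc comp_id id_comp)

lemma commutes_conj_iff: "s \<circ> s = id \<Longrightarrow> commutes s (s \<circ> v \<circ> s) \<longleftrightarrow> commutes s v"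
  unfolding commutes_def by (metis comp_assoc comp_id id_comp)

lemma act_eq: "act s v = (if commutes s v then s \<circ> v else s \<circ> v \<circ> s)"
  by (simp add: act_def commutes_def)

lemma inj_act: "inj s \<Longrightarrow> inj v \<Longrightarrow> inj (act s v)"
  by (simp add: act_def inj_compose)

lemma act_act:
  assumes "s \<circ> s = id"
  shows "act s (act s v) = v"
proof (cases "commutes s v")
  case True
  then show ?thesis
    using assms by (simp add: act_eq commutes_comp_iff comp_assoc[symmetric])
next
  case False
  then show ?thesis
    using assms by (simp add: act_eq commutes_conj_iff comp_assoc[symmetric]) (simp add: comp_assoc)
qed

lemma act_Inv:
  assumes s: "s \<in> Inv n" and v: "v \<in> Inv n"
  shows "act s v \<in> Inv n"
proof -
  have sp: "s permutes {1..n}" "s \<circ> s = id" and vp: "v permutes {1..n}" "v \<circ> v = id"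
    using s v by (auto simp: Inv_def Sym_def)
  show ?thesis
  proof (cases "commutes s v")
    case True
    then have "(s \<circ> v) \<circ> (s \<circ> v) = id"
      by (metis commutes_def comp_assoc comp_id sp(2) vp(2))
    then show ?thesis
      using True permutes_compose[OF vp(1) sp(1)] by (simp add: act_eq Inv_def Sym_def)
  next
    case False
    have "(s \<circ> v \<circ> s) \<circ> (s \<circ> v \<circ> s) = id"
      by (metis comp_assoc comp_id sp(2) vp(2))
    then show ?thesis
      using False permutes_compose[OF permutes_compose[OF sp(1) vp(1)] sp(1)]
      by (simp add: act_eq Inv_def Sym_def comp_assoc)
  qed
qed

lemma act_sr_apply:
  "inj w \<Longrightarrow> act (sr i) w t = (if (w i = i \<and> w (Suc i) = Suc i) \<or> (w i = Suc i \<and> w (Suc i) = i)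
     then sr i (w t) else sr i (w (sr i t)))"
  by (simp add: act_eq commutes_sr_iff)

lemma act_sr_descent_iff:
  assumes "inj v"
  shows "act (sr i) v (Suc i) < act (sr i) v i \<longleftrightarrow> v i < v (Suc i)"
  using assms by (auto simp: act_sr_apply sr_apply inj_eq)

section \<open>Inversions and excedances\<close>

definition inversions :: "nat \<Rightarrow> (nat \<Rightarrow> nat) \<Rightarrow> (nat \<times> nat) set" where
  "inversions n v = {(p, q). p \<in> {1..n} \<and> q \<in> {1..n} \<and> p < q \<and> v q < v p}"

definition excedances :: "nat \<Rightarrow> (nat \<Rightarrow> nat) \<Rightarrow> nat set" where
  "excedances n v = {p \<in> {1..n}. p < v p}"

lemma finite_inversions [simp]: "finite (inversions n v)"
  by (rule finite_subset[of _ "{1..n} \<times> {1..n}"]) (auto simp: inversions_def)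

lemma finite_excedances [simp]: "finite (excedances n v)"
  by (simp add: excedances_def)

lemma inversions_comp_sr:
  assumes i: "i \<in> {1..<n}" and asc: "g i < g (Suc i)"
  shows "inversions n (g \<circ> sr i) = insert (i, Suc i) (map_prod (sr i) (sr i) ` inversions n g)"
proof (intro set_eqI)
  fix x :: "nat \<times> nat"
  obtain p q where x: "x = (p, q)" by fastforce
  have "x \<in> inversions n (g \<circ> sr i) \<longleftrightarrow> x = (i, Suc i) \<or> map_prod (sr i) (sr i) x \<in> inversions n g"
    unfolding x using assms by (auto simp: inversions_def sr_apply)
  then show "x \<in> inversions n (g \<circ> sr i) \<longleftrightarrow> x \<in> insert (i, Suc i) (map_prod (sr i) (sr i) ` inversions n g)"
    by (simp add: involution_image_iff map_prod_sr_sr)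
qed

lemma card_inversions_comp_sr:
  assumes i: "i \<in> {1..<n}" and asc: "g i < g (Suc i)"
  shows "card (inversions n (g \<circ> sr i)) = card (inversions n g) + 1"
proof -
  have "(i, Suc i) \<notin> map_prod (sr i) (sr i) ` inversions n g"
    by (auto simp: inversions_def sr_apply split: if_splits)
  moreover have "inj (map_prod (sr i) (sr i))" by (intro prod.inj_map inj_sr)
  ultimately show ?thesis
    unfolding inversions_comp_sr[OF assms] by (simp add: card_image inj_on_subset)
qed

lemma card_inversions_sr_comp:
  assumes v: "v \<in> Inv n" and i: "i \<in> {1..<n}" and asc: "v i < v (Suc i)"
  shows "card (inversions n (sr i \<circ> v)) = card (inversions n v) + 1"
proof -
  have "(p, q) \<in> inversions n (sr i \<circ> v) \<longleftrightarrow> (p, q) = (v i, v (Suc i)) \<or> (p, q) \<in> inversions n v" for p q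
  proof (cases "{v p, v q} = {i, Suc i}")
    case True
    then have "(p, q) = (v i, v (Suc i)) \<or> (p, q) = (v (Suc i), v i)"
      using InvD(2)[OF v, of p] InvD(2)[OF v, of q] by (auto simp: doubleton_eq_iff)
    then show ?thesis
      using asc i Inv_closed[OF v, of i] Inv_closed[OF v, of "Suc i"]
        InvD(2)[OF v, of i] InvD(2)[OF v, of "Suc i"]
      by (elim disjE) (auto simp: inversions_def sr_apply)
  next
    case False
    have "sr i (v q) < sr i (v p) \<longleftrightarrow> v q < v p" if "p < q"
      using that False InvD(3)[OF v]
      by (intro sr_less_sr_iff) (auto simp: inj_eq insert_commute)
    then have "(p, q) \<in> inversions n (sr i \<circ> v) \<longleftrightarrow> (p, q) \<in> inversions n v"
      by (auto simp: inversions_def)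
    moreover have "(p, q) \<noteq> (v i, v (Suc i))"
      using False InvD(2)[OF v, of i] InvD(2)[OF v, of "Suc i"] by auto
    ultimately show ?thesis by blast
  qed
  then have "inversions n (sr i \<circ> v) = insert (v i, v (Suc i)) (inversions n v)"
    by auto
  moreover have "(v i, v (Suc i)) \<notin> inversions n v"
    using asc InvD(2)[OF v] by (auto simp: inversions_def)
  ultimately show ?thesis by simp
qed

lemma excedances_conj_sr:
  assumes v: "v \<in> Inv n" and i: "i \<in> {1..<n}" and "v i \<noteq> Suc i"
  shows "excedances n (sr i \<circ> v \<circ> sr i) = sr i ` excedances n v"
proof (rule set_eqI)
  fix p
  define q where "q = sr i p"
  have p: "p = sr i q" by (simp add: q_def)
  have "{q, v q} \<noteq> {i, Suc i}"
    using assms InvD(2)[OF v, of "Suc i"] by (auto simp: doubleton_eq_iff)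
  then have "sr i q < sr i (v q) \<longleftrightarrow> q < v q"
    by (cases "v q = q") (simp_all add: sr_less_sr_iff)
  moreover have "sr i q \<in> {1..n} \<longleftrightarrow> q \<in> {1..n}"
    using i by (auto simp: sr_apply)
  ultimately show "p \<in> excedances n (sr i \<circ> v \<circ> sr i) \<longleftrightarrow> p \<in> sr i ` excedances n v"
    by (simp add: excedances_def involution_image_iff p) blast
qed

definition inv_exc :: "nat \<Rightarrow> (nat \<Rightarrow> nat) \<Rightarrow> nat" where
  "inv_exc n v = card (inversions n v) + card (excedances n v)"

lemma excedances_sr_comp:
  assumes v: "v \<in> Inv n" and i: "i \<in> {1..<n}" and fixed: "v i = i" "v (Suc i) = Suc i"
  shows "excedances n (sr i \<circ> v) = insert i (excedances n v)"
proof (rule set_eqI)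
  fix p
  have "v p \<notin> {i, Suc i}" if "p \<notin> {i, Suc i}"
    using that fixed InvD(2)[OF v, of p] by auto
  then show "p \<in> excedances n (sr i \<circ> v) \<longleftrightarrow> p \<in> insert i (excedances n v)"
    using i fixed by (cases "p \<in> {i, Suc i}") (auto simp: excedances_def sr_apply)
qed

lemma inv_exc_act_sr_ascent:
  assumes v: "v \<in> Inv n" and i: "i \<in> {1..<n}" and asc: "v i < v (Suc i)"
  shows "inv_exc n (act (sr i) v) = inv_exc n v + 2"
proof (cases "commutes (sr i) v")
  case True
  then have fixed: "v i = i" "v (Suc i) = Suc i"
    using asc commutes_sr_iff[OF InvD(3)[OF v]] by auto
  then have "i \<notin> excedances n v" by (simp add: excedances_def)
  then show ?thesis
    using True card_inversions_sr_comp[OF v i asc] excedances_sr_comp[OF v i fixed]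
    by (simp add: inv_exc_def act_eq)
next
  case False
  then have moved: "{v i, v (Suc i)} \<noteq> {i, Suc i}"
    using asc commutes_sr_iff[OF InvD(3)[OF v]] by (auto simp: doubleton_eq_iff)
  then have "sr i (v i) < sr i (v (Suc i))"
    using asc by (simp add: sr_less_sr_iff)
  then have "card (inversions n (sr i \<circ> v \<circ> sr i)) = card (inversions n v) + 2"
    using card_inversions_comp_sr[OF i, of "sr i \<circ> v"] card_inversions_sr_comp[OF v i asc] by simp
  moreover have "v i \<noteq> Suc i"
    using asc InvD(2)[OF v, of i] by auto
  then have "card (excedances n (sr i \<circ> v \<circ> sr i)) = card (excedances n v)"
    using excedances_conj_sr[OF v i] card_image[OF inj_on_subset[OF inj_sr subset_UNIV]] by simp
  ultimately show ?thesis
    using False by (simp add: inv_exc_def act_eq)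
qed

lemma inv_exc_act_sr_descent:
  assumes v: "v \<in> Inv n" and i: "i \<in> {1..<n}" and des: "v (Suc i) < v i"
  shows "inv_exc n (act (sr i) v) + 2 = inv_exc n v"
proof -
  let ?u = "act (sr i) v"
  have u: "?u \<in> Inv n" by (rule act_Inv[OF sr_Inv[OF i] v])
  have "?u i < ?u (Suc i)"
    using des act_sr_descent_iff[OF InvD(3)[OF u], of i] by (simp add: act_act)
  from inv_exc_act_sr_ascent[OF u i this] show ?thesis by (simp add: act_act)
qed

lemma inv_exc_act_sr_le:
  assumes v: "v \<in> Inv n" and i: "i \<in> {1..<n}"
  shows "inv_exc n (act (sr i) v) \<le> inv_exc n v + 2"
proof -
  have "v i \<noteq> v (Suc i)" using InvD(3)[OF v] by (simp add: inj_eq)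
  then show ?thesis
    using inv_exc_act_sr_ascent[OF v i] inv_exc_act_sr_descent[OF v i] by (cases "v i < v (Suc i)") auto
qed

lemma inv_exc_act_sr_eq_iff:
  assumes v: "v \<in> Inv n" and i: "i \<in> {1..<n}"
  shows "inv_exc n (act (sr i) v) = inv_exc n v + 2 \<longleftrightarrow> v i < v (Suc i)"
proof -
  have "v i \<noteq> v (Suc i)" using InvD(3)[OF v] by (simp add: inj_eq)
  then show ?thesis
    using inv_exc_act_sr_ascent[OF v i] inv_exc_act_sr_descent[OF v i] by (cases "v i < v (Suc i)") auto
qed

section \<open>The length formula\<close>

lemma act_seq_Nil [simp]: "act_seq [] w = w"
  by (simp add: act_seq_def)

lemma act_seq_Cons [simp]: "act_seq (i # js) w = act (sr i) (act_seq js w)"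
  by (simp add: act_seq_def)

lemma act_seq_append: "act_seq (xs @ ys) w = act_seq xs (act_seq ys w)"
  by (simp add: act_seq_def)

lemma act_seq_Inv: "set js \<subseteq> {1..<n} \<Longrightarrow> w \<in> Inv n \<Longrightarrow> act_seq js w \<in> Inv n"
  by (induction js) (auto intro!: act_Inv sr_Inv)

lemma inv_exc_act_seq_le:
  "set js \<subseteq> {1..<n} \<Longrightarrow> w \<in> Inv n \<Longrightarrow> inv_exc n (act_seq js w) \<le> inv_exc n w + 2 * length js"
proof (induction js)
  case (Cons j js)
  then have "inv_exc n (act_seq (j # js) w) \<le> inv_exc n (act_seq js w) + 2"
    using inv_exc_act_sr_le act_seq_Inv by simp
  with Cons show ?case by simp
qed simp

lemma inv_exc_id [simp]: "inv_exc n id = 0"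
proof -
  have "inversions n id = {}" "excedances n id = {}"
    by (auto simp: inversions_def excedances_def)
  then show ?thesis by (simp add: inv_exc_def)
qed

lemma permutes_ascending_eq_id:
  assumes v: "v permutes {1..n}" and asc: "\<And>i. i \<in> {1..<n} \<Longrightarrow> v i < v (Suc i)"
  shows "v = id"
proof
  fix p
  have range: "v p \<in> {1..n}" if "p \<in> {1..n}" for p
    using permutes_in_image[OF v] that by blast
  have lower: "p \<le> v p" if "p \<in> {1..n}" for p
    using that
  proof (induction p)
    case (Suc p)
    then show ?case
      using range[of 1] asc[of p] by (cases "p = 0") force+
  qed simp
  have upper: "v (n - t) \<le> n - t" if "t < n" for t
    using that
  proof (induction t)
    case 0
    then show ?case using range[of n] by simp
  next
    case (Suc t)
    then have "v (n - Suc t) < v (Suc (n - Suc t))" by (intro asc) auto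
    moreover have "Suc (n - Suc t) = n - t" using Suc by auto
    ultimately show ?case using Suc by auto
  qed
  show "v p = id p"
  proof (cases "p \<in> {1..n}")
    case True
    then show ?thesis using lower[of p] upper[of "n - p"] by auto
  next
    case False
    then show ?thesis using v by (simp add: permutes_not_in)
  qed
qed

lemma Inv_ex_descent:
  assumes v: "v \<in> Inv n" and "v \<noteq> id"
  obtains i where "i \<in> {1..<n}" "v (Suc i) < v i"
proof -
  have "\<not> (\<forall>i\<in>{1..<n}. v i < v (Suc i))"
    using assms permutes_ascending_eq_id InvD(1) by blast
  moreover have "v i \<noteq> v (Suc i)" for i using InvD(3)[OF v] by (simp add: inj_eq)
  ultimately show ?thesis using that by (meson linorder_neqE_nat)
qed

lemma ex_act_seq_inv_exc:
  assumes "v \<in> Inv n"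
  shows "\<exists>js. 2 * length js = inv_exc n v \<and> set js \<subseteq> {1..<n} \<and> act_seq js id = v"
  using assms
proof (induction "inv_exc n v" arbitrary: v rule: less_induct)
  case less
  show ?case
  proof (cases "v = id")
    case True
    then show ?thesis by (intro exI[of _ "[]"]) simp
  next
    case False
    then obtain i where i: "i \<in> {1..<n}" "v (Suc i) < v i"
      using Inv_ex_descent[OF less.prems] by blast
    let ?u = "act (sr i) v"
    have u: "?u \<in> Inv n" by (rule act_Inv[OF sr_Inv[OF i(1)] less.prems])
    have step: "inv_exc n ?u + 2 = inv_exc n v"
      by (rule inv_exc_act_sr_descent[OF less.prems i])
    then obtain js where "2 * length js = inv_exc n ?u" "set js \<subseteq> {1..<n}" "act_seq js id = ?u"
      using less.hyps[OF _ u] by fastforce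
    then show ?thesis
      using step i by (intro exI[of _ "i # js"]) (simp add: act_act)
  qed
qed

lemma two_rho_eq_inv_exc:
  assumes v: "v \<in> Inv n"
  shows "2 * rho n v = inv_exc n v"
proof -
  obtain js where js: "2 * length js = inv_exc n v" "set js \<subseteq> {1..<n}" "act_seq js id = v"
    using ex_act_seq_inv_exc[OF v] by blast
  have "rho n v = length js"
    unfolding rho_def
  proof (rule Least_equality)
    fix k
    assume "\<exists>is. length is = k \<and> set is \<subseteq> {1..<n} \<and> act_seq is id = v"
    then obtain is' where "length is' = k" "set is' \<subseteq> {1..<n}" "act_seq is' id = v" by blast
    then show "length js \<le> k"
      using inv_exc_act_seq_le[of is' n id] id_Inv js(1) by auto
  qed (use js in blast)
  then show ?thesis using js by simp
qed

lemma inv_exc_act_seq_drop: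
  assumes js: "set js \<subseteq> {1..<n}" and u: "u \<in> Inv n"
    and additive: "inv_exc n (act_seq js u) = inv_exc n u + 2 * length js"
    and m: "m \<le> length js"
  shows "inv_exc n (act_seq (drop m js) u) = inv_exc n u + 2 * (length js - m)"
proof -
  have take: "set (take m js) \<subseteq> {1..<n}" and drop: "set (drop m js) \<subseteq> {1..<n}"
    using js set_take_subset set_drop_subset by fastforce+
  have "act_seq js u = act_seq (take m js) (act_seq (drop m js) u)"
    by (simp add: act_seq_append[symmetric])
  then have "inv_exc n (act_seq js u) \<le> inv_exc n (act_seq (drop m js) u) + 2 * m"
    using inv_exc_act_seq_le[OF take act_seq_Inv[OF drop u]] m by simp
  moreover have "inv_exc n (act_seq (drop m js) u) \<le> inv_exc n u + 2 * (length js - m)"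
    using inv_exc_act_seq_le[OF drop u] by simp
  ultimately show ?thesis using additive m by linarith
qed

lemma reduced_seq_ascent:
  assumes red: "reduced_seq n js w" and m: "m < length js"
  defines "v \<equiv> act_seq (drop (Suc m) js) w"
  shows "v (js ! m) < v (Suc (js ! m))"
proof -
  have js: "set js \<subseteq> {1..<n}" and w: "w \<in> Inv n"
    and "rho n (act_seq js w) = rho n w + length js"
    using red by (auto simp: reduced_seq_def)
  then have additive: "inv_exc n (act_seq js w) = inv_exc n w + 2 * length js"
    using two_rho_eq_inv_exc[OF w] two_rho_eq_inv_exc[OF act_seq_Inv[OF js w]] by simp
  have i: "js ! m \<in> {1..<n}" using js m nth_mem by blast
  have v: "v \<in> Inv n"
    unfolding v_def using js set_drop_subset by (intro act_seq_Inv[OF _ w]) fastforce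
  have "drop m js = js ! m # drop (Suc m) js" using m by (rule Cons_nth_drop_Suc[symmetric])
  then have "inv_exc n (act (sr (js ! m)) v) = inv_exc n v + 2"
    using inv_exc_act_seq_drop[OF js w additive, of m] inv_exc_act_seq_drop[OF js w additive, of "Suc m"] m
    by (simp add: v_def)
  then show ?thesis using inv_exc_act_sr_eq_iff[OF v i] by simp
qed

text \<open>The six tests are those made by \<open>\<ltimes>\<close> along \<open>w, x \<ltimes> w, y \<ltimes> x \<ltimes> w, x \<ltimes> y \<ltimes> x \<ltimes> w\<close> and along
  \<open>w, y \<ltimes> w, x \<ltimes> y \<ltimes> w, y \<ltimes> x \<ltimes> y \<ltimes> w\<close>; the three disjuncts are the cases (a), (b), (c).\<close>

definition commutation_cases :: "(nat \<Rightarrow> nat) \<Rightarrow> (nat \<Rightarrow> nat) \<Rightarrow> (nat \<Rightarrow> nat) \<Rightarrow> bool" where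
  "commutation_cases x y w \<longleftrightarrow>
     (\<not> commutes x w \<and> \<not> commutes y (x \<circ> w \<circ> x) \<and> \<not> commutes x (y \<circ> x \<circ> w \<circ> x \<circ> y) \<and>
      \<not> commutes y w \<and> \<not> commutes x (y \<circ> w \<circ> y) \<and> \<not> commutes y (x \<circ> y \<circ> w \<circ> y \<circ> x)) \<or>
     (\<not> commutes x w \<and> \<not> commutes y (x \<circ> w \<circ> x) \<and> commutes x (y \<circ> x \<circ> w \<circ> x \<circ> y) \<and>
      commutes y w \<and> \<not> commutes x (y \<circ> w) \<and> \<not> commutes y (x \<circ> y \<circ> w \<circ> x)) \<or>
     (commutes x w \<and> \<not> commutes y (x \<circ> w) \<and> \<not> commutes x (y \<circ> x \<circ> w \<circ> y) \<and>
      \<not> commutes y w \<and> \<not> commutes x (y \<circ> w \<circ> y) \<and> commutes y (x \<circ> y \<circ> w \<circ> y \<circ> x))"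

lemma commutation_cases_of_ascents:
  assumes inv: "\<And>t. w (w t) = t" and adj: "j = Suc i \<or> i = Suc j"
    and asc1: "w i < w (Suc i)"
    and asc2: "act (sr i) w j < act (sr i) w (Suc j)"
    and asc3: "act (sr j) (act (sr i) w) i < act (sr j) (act (sr i) w) (Suc i)"
  shows "commutation_cases (sr i) (sr j) w"
proof -
  obtain m where ij: "(i = m \<and> j = Suc m) \<or> (i = Suc m \<and> j = m)" using adj by blast
  have inj: "inj w" by (rule injI) (metis inv)
  have inj_act_sr: "inj (act (sr k) w)" for k by (simp add: inj_act inj)
  obtain a b c where a: "w m = a" and b: "w (Suc m) = b" and c: "w (Suc (Suc m)) = c" by blast
  have ab: "a = Suc m \<longleftrightarrow> b = m" and ac: "a = Suc (Suc m) \<longleftrightarrow> c = m"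
    and bc: "b = Suc (Suc m) \<longleftrightarrow> c = Suc m"
    using inv a b c by metis+
  have d: "a \<noteq> b" "a \<noteq> c" "b \<noteq> c" using inj a b c by (auto simp: inj_eq)
  txt \<open>All tests only involve the values of \<open>w\<close> at \<open>m, m+1, m+2\<close>; once \<open>sr_apply\<close> is unfolded,
    comparing these values with \<open>m\<close> and \<open>m+2\<close> decides each of them.\<close>
  have "(w m < w (Suc m) \<and> act (sr m) w (Suc m) < act (sr m) w (Suc (Suc m)) \<and>
      act (sr (Suc m)) (act (sr m) w) m < act (sr (Suc m)) (act (sr m) w) (Suc m)
        \<longrightarrow> commutation_cases (sr m) (sr (Suc m)) w) \<and>
    (w (Suc m) < w (Suc (Suc m)) \<and> act (sr (Suc m)) w m < act (sr (Suc m)) w (Suc m) \<and>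
      act (sr m) (act (sr (Suc m)) w) (Suc m) < act (sr m) (act (sr (Suc m)) w) (Suc (Suc m))
        \<longrightarrow> commutation_cases (sr (Suc m)) (sr m) w)"
    unfolding commutation_cases_def
    apply (simp only: commutes_sr_iff inj inj_compose inj_sr inj_act_sr act_sr_apply simp_thms o_apply)
    apply (simp add: sr_apply)
    apply (simp only: a b c)
    using d ab ac bc le_less_linear[of a m] le_less_linear[of b m] le_less_linear[of c m]
      le_less_linear[of a "Suc (Suc m)"] le_less_linear[of b "Suc (Suc m)"] le_less_linear[of c "Suc (Suc m)"]
    by (elim disjE; simp)
  with ij asc1 asc2 asc3 show ?thesis by auto
qed

theorem corollary2p14:
  fixes n :: nat and w :: "nat \<Rightarrow> nat" and "is" :: "nat list"
  defines "k \<equiv> length is"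
  defines "x \<equiv> sr (is ! (k - 1))"
  defines "y \<equiv> sr (is ! (k - 2))"
  assumes w: "w \<in> Inv n"
    and red: "reduced_seq n is w"
    and k3: "k \<ge> 3"
    and idx1: "is ! (k - 3) = is ! (k - 1)"
    and idx2: "is ! (k - 2) = is ! (k - 1) + 1 \<or> is ! (k - 2) + 1 = is ! (k - 1)"
  defines "A \<equiv> x \<circ> w \<noteq> w \<circ> x \<and> y \<circ> x \<circ> w \<circ> x \<noteq> x \<circ> w \<circ> x \<circ> y \<and>
               x \<circ> y \<circ> x \<circ> w \<circ> x \<circ> y \<noteq> y \<circ> x \<circ> w \<circ> x \<circ> y \<circ> x \<and>
               y \<circ> w \<noteq> w \<circ> y \<and> x \<circ> y \<circ> w \<circ> y \<noteq> y \<circ> w \<circ> y \<circ> x \<and>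
               y \<circ> x \<circ> y \<circ> w \<circ> y \<circ> x \<noteq> x \<circ> y \<circ> w \<circ> y \<circ> x \<circ> y"
  defines "B \<equiv> x \<circ> w \<noteq> w \<circ> x \<and> y \<circ> x \<circ> w \<circ> x \<noteq> x \<circ> w \<circ> x \<circ> y \<and>
               x \<circ> y \<circ> x \<circ> w \<circ> x \<circ> y = y \<circ> x \<circ> w \<circ> x \<circ> y \<circ> x \<and>
               y \<circ> w = w \<circ> y \<and> x \<circ> y \<circ> w \<noteq> y \<circ> w \<circ> x \<and>
               y \<circ> x \<circ> y \<circ> w \<circ> x \<noteq> x \<circ> y \<circ> w \<circ> x \<circ> y"
  defines "C \<equiv> x \<circ> w = w \<circ> x \<and> y \<circ> x \<circ> w \<noteq> x \<circ> w \<circ> y \<and>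
               x \<circ> y \<circ> x \<circ> w \<circ> y \<noteq> y \<circ> x \<circ> w \<circ> y \<circ> x \<and>
               y \<circ> w \<noteq> w \<circ> y \<and> x \<circ> y \<circ> w \<circ> y \<noteq> y \<circ> w \<circ> y \<circ> x \<and>
               y \<circ> x \<circ> y \<circ> w \<circ> y \<circ> x = x \<circ> y \<circ> w \<circ> y \<circ> x \<circ> y"
  shows "(A \<and> \<not> B \<and> \<not> C) \<or> (\<not> A \<and> B \<and> \<not> C) \<or> (\<not> A \<and> \<not> B \<and> C)"
proof -
  define i j where "i = is ! (k - 1)" and "j = is ! (k - 2)"
  have x: "x = sr i" and y: "y = sr j" by (simp_all add: x_def y_def i_def j_def)
  have suc: "Suc (k - 1) = k" "Suc (k - 2) = k - 1" "Suc (k - 3) = k - 2" using k3 by auto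
  have step: "act_seq (drop m is) w = act (sr (is ! m)) (act_seq (drop (Suc m) is) w)" if "m < k" for m
    using that by (simp add: k_def Cons_nth_drop_Suc[symmetric])
  have V1: "act_seq (drop (k - 1) is) w = act x w"
    using step[of "k - 1"] k3 suc by (simp add: k_def x i_def)
  have V2: "act_seq (drop (k - 2) is) w = act y (act x w)"
    using step[of "k - 2"] k3 suc V1 by (simp add: y j_def)
  have asc1: "w i < w (Suc i)"
    using reduced_seq_ascent[OF red, of "k - 1"] k3 suc by (simp add: k_def i_def)
  have asc2: "act (sr i) w j < act (sr i) w (Suc j)"
    using reduced_seq_ascent[OF red, of "k - 2"] k3 suc V1 by (simp add: k_def x j_def)
  have asc3: "act (sr j) (act (sr i) w) i < act (sr j) (act (sr i) w) (Suc i)"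
    using reduced_seq_ascent[OF red, of "k - 3"] k3 suc V2 idx1 by (simp add: k_def x y i_def)
  have "j = Suc i \<or> i = Suc j" using idx2 by (auto simp: i_def j_def)
  from commutation_cases_of_ascents[OF InvD(2)[OF w] this asc1 asc2 asc3]
  have "commutation_cases x y w" by (simp add: x y)
  txt \<open>The cases are exclusive because they differ in whether \<open>x\<close> and \<open>y\<close> commute with \<open>w\<close>.\<close>
  then show ?thesis
    unfolding A_def B_def C_def commutation_cases_def commutes_def by (simp only: comp_assoc) blast
qed

end
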